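(* Let $G$ be a $B_2$-EPG graph given with a representation, let $a,b$ be two rows, and let $G_{ab}$ be the set of vertices of $G$ with index exactly $\{a,b\}$. Then the subgraph of $G$ induced by $G_{ab}$ is a $2$-track interval graph.
   Context: A graph $G$ is a $B_k$-EPG graph if each vertex $u$ can be assigned a path $P_u$ in the planar orthogonal grid with at most $k$ bends such that $uv\in E(G)$ iff $P_u$ and $P_v$ share at least one grid edge (a representation); for $B_2$-EPG graphs one assumes w.l.o.g. every path has exactly two bends. A vertex $u$ intersects a row if $P_u$ contains a grid edge of that row; the index of $u$ is the set of rows it intersects. A $2$-track interval is the union of two intervals lying on two distinct lines (tracks); a $2$-track interval graph is an intersection graph of $2$-track intervals with the same two tracks, i.e. the edge-union of two interval graphs on the same vertex set. *)

theory Defs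
  imports Complex_Main
begin

type_synonym gpoint = "int \<times> int"   \<comment> \<open>grid point (column x, row y)\<close>

definition grid_adj :: "gpoint \<Rightarrow> gpoint \<Rightarrow> bool" where
  "grid_adj p q \<longleftrightarrow> \<bar>fst p - fst q\<bar> + \<bar>snd p - snd q\<bar> = 1"

definition grid_path :: "gpoint list \<Rightarrow> bool" where
  "grid_path ps \<longleftrightarrow> length ps \<ge> 2 \<and> distinct ps \<and>
     (\<forall>i. Suc i < length ps \<longrightarrow> grid_adj (ps ! i) (ps ! Suc i))"

definition path_edges :: "gpoint list \<Rightarrow> gpoint set set" where
  "path_edges ps = {{ps ! i, ps ! Suc i} | i. Suc i < length ps}"

definition step_dir :: "gpoint \<Rightarrow> gpoint \<Rightarrow> int \<times> int" where
  "step_dir p q = (fst q - fst p, snd q - snd p)"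

definition bends :: "gpoint list \<Rightarrow> nat" where
  "bends ps = card {i. 0 < i \<and> Suc i < length ps \<and>
      step_dir (ps ! (i - 1)) (ps ! i) \<noteq> step_dir (ps ! i) (ps ! Suc i)}"

definition intersects_row :: "gpoint list \<Rightarrow> int \<Rightarrow> bool" where
  "intersects_row ps y \<longleftrightarrow> (\<exists>x. {(x, y), (x + 1, y)} \<in> path_edges ps)"

definition row_index :: "('v \<Rightarrow> gpoint list) \<Rightarrow> 'v \<Rightarrow> int set" where
  "row_index P u = {y. intersects_row (P u) y}"

definition Bk_EPG_rep :: "nat \<Rightarrow> 'v set \<Rightarrow> ('v \<Rightarrow> 'v \<Rightarrow> bool) \<Rightarrow> ('v \<Rightarrow> gpoint list) \<Rightarrow> bool" where
  "Bk_EPG_rep k V E P \<longleftrightarrow>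
     (\<forall>u\<in>V. grid_path (P u) \<and> bends (P u) \<le> k) \<and>
     (\<forall>u\<in>V. \<forall>v\<in>V. u \<noteq> v \<longrightarrow> (E u v \<longleftrightarrow> path_edges (P u) \<inter> path_edges (P v) \<noteq> {}))"

definition two_track_interval_graph :: "'v set \<Rightarrow> ('v \<Rightarrow> 'v \<Rightarrow> bool) \<Rightarrow> bool" where
  "two_track_interval_graph V E \<longleftrightarrow>
     (\<exists>(l1::'v \<Rightarrow> real) (r1::'v \<Rightarrow> real) (l2::'v \<Rightarrow> real) (r2::'v \<Rightarrow> real).
        (\<forall>u\<in>V. l1 u \<le> r1 u \<and> l2 u \<le> r2 u) \<and>
        (\<forall>u\<in>V. \<forall>v\<in>V. u \<noteq> v \<longrightarrow>
           (E u v \<longleftrightarrow> {l1 u..r1 u} \<inter> {l1 v..r1 v} \<noteq> {} \<or> {l2 u..r2 u} \<inter> {l2 v..r2 v} \<noteq> {})))"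

end

theory Submission
  imports Defs
begin

text \<open>A path with at most two bends that uses horizontal edges of two distinct rows a and b must
  turn once to leave row a and once to enter row b. Hence it is a horizontal run in row a, a vertical
  run in some column x spanning the rows between a and b, and a horizontal run in row b, where x is an
  end of both horizontal runs. Two such paths share a grid edge iff their runs in row a overlap, their
  runs in row b overlap, or their columns x coincide. Represent a vertex on track a (resp. b) by the
  column interval of its run in row a (resp. b), shrunk by 1/4 at the end away from x: overlapping
  runs still meet, runs that merely touch become disjoint unless they touch at a common column x.\<close>

definition row_edges :: "int \<Rightarrow> int \<Rightarrow> int \<Rightarrow> gpoint set set" where
  "row_edges y l r = (\<lambda>x. {(x, y), (x + 1, y)}) ` {l..<r}"

definition column_edges :: "int \<Rightarrow> int \<Rightarrow> int \<Rightarrow> gpoint set set" where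
  "column_edges x l r = (\<lambda>y. {(x, y), (x, y + 1)}) ` {l..<r}"

lemma column_edges_eq_swap_row_edges:
  "column_edges x l r = (`) prod.swap ` row_edges x l r"
  unfolding column_edges_def row_edges_def by (auto simp: image_image)

lemma row_run_edges:
  fixes f :: "nat \<Rightarrow> gpoint"
  assumes run: "\<forall>k. p \<le> k \<and> k < p + m \<longrightarrow> f (Suc k) = (fst (f k) + s, snd (f k))"
    and s: "s = 1 \<or> s = -1"
  shows "f (p + m) = (fst (f p) + s * int m, snd (f p)) \<and>
    (\<lambda>k. {f k, f (Suc k)}) ` {p..<p + m} =
      row_edges (snd (f p)) (min (fst (f p)) (fst (f p) + s * int m)) (max (fst (f p)) (fst (f p) + s * int m))"
  using run
proof (induction m)
  case 0
  then show ?case by (simp add: row_edges_def)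
next
  case (Suc m)
  obtain x y where fp: "f p = (x, y)" by fastforce
  from Suc have IH: "f (p + m) = (x + s * int m, y)"
    "(\<lambda>k. {f k, f (Suc k)}) ` {p..<p + m} = row_edges y (min x (x + s * int m)) (max x (x + s * int m))"
    by (simp_all add: fp)
  have last: "f (p + Suc m) = (x + s * int m + s, y)"
    using Suc.prems IH(1) by simp
  have "{p..<p + Suc m} = insert (p + m) {p..<p + m}" by auto
  moreover have "row_edges y (min x (x + s * int (Suc m))) (max x (x + s * int (Suc m))) =
      insert {(x + s * int m, y), (x + s * int m + s, y)} (row_edges y (min x (x + s * int m)) (max x (x + s * int m)))"
  proof (cases "s = 1")
    case True
    have "{x..<x + int (Suc m)} = insert (x + int m) {x..<x + int m}" by auto
    then show ?thesis using True by (simp add: row_edges_def)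
  next
    case False
    with s have "s = -1" by simp
    moreover have "{x - int (Suc m)..<x} = insert (x - int m - 1) {x - int m..<x}" by auto
    ultimately show ?thesis by (simp add: row_edges_def algebra_simps insert_commute)
  qed
  ultimately show ?case using IH last fp by (simp add: insert_commute algebra_simps)
qed

lemma column_run_edges:
  fixes f :: "nat \<Rightarrow> gpoint"
  assumes run: "\<forall>k. p \<le> k \<and> k < p + m \<longrightarrow> f (Suc k) = (fst (f k), snd (f k) + s)"
    and s: "s = 1 \<or> s = -1"
  shows "f (p + m) = (fst (f p), snd (f p) + s * int m) \<and>
    (\<lambda>k. {f k, f (Suc k)}) ` {p..<p + m} =
      column_edges (fst (f p)) (min (snd (f p)) (snd (f p) + s * int m)) (max (snd (f p)) (snd (f p) + s * int m))"
proof -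
  define g where "g = prod.swap \<circ> f"
  have "\<forall>k. p \<le> k \<and> k < p + m \<longrightarrow> g (Suc k) = (fst (g k) + s, snd (g k))"
    using run by (simp add: g_def)
  note row = row_run_edges[OF this s]
  have "(\<lambda>k. {f k, f (Suc k)}) ` {p..<p + m} = (`) prod.swap ` (\<lambda>k. {g k, g (Suc k)}) ` {p..<p + m}"
    by (auto simp: g_def image_image)
  with row show ?thesis
    by (simp add: g_def column_edges_eq_swap_row_edges prod_eq_iff)
qed

lemma eq_if_steps_eq:
  fixes d :: "nat \<Rightarrow> 'a"
  assumes "\<forall>i. p \<le> i \<and> i < q \<longrightarrow> d (Suc i) = d i" "p \<le> j" "j \<le> q"
  shows "d j = d p"
  using assms(2,3)
proof (induction rule: dec_induct)
  case (step n)
  then show ?case using assms(1) by simp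
qed simp

lemma exists_step_change:
  fixes d :: "nat \<Rightarrow> 'a"
  assumes "p \<le> q" "d p \<noteq> d q"
  obtains i where "p \<le> i" "i < q" "d (Suc i) \<noteq> d i"
proof -
  have "\<not> (\<forall>i. p \<le> i \<and> i < q \<longrightarrow> d (Suc i) = d i)"
    using eq_if_steps_eq[of p q d q] assms by auto
  then show thesis using that by auto
qed

lemma step_dir_step: "q = (fst p + fst (step_dir p q), snd p + snd (step_dir p q))"
  by (simp add: step_dir_def)

lemma step_dir_grid_adj_same_row:
  assumes "grid_adj p q" "snd p = snd q"
  shows "snd (step_dir p q) = 0 \<and> (fst (step_dir p q) = 1 \<or> fst (step_dir p q) = -1)"
  using assms unfolding grid_adj_def step_dir_def by auto

lemma step_dir_grid_adj_other_row:
  assumes "grid_adj p q" "snd p \<noteq> snd q"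
  shows "fst (step_dir p q) = 0 \<and> (snd (step_dir p q) = 1 \<or> snd (step_dir p q) = -1)"
  using assms unfolding grid_adj_def step_dir_def by auto

text \<open>Turn i is a bend at the vertex Suc i, an indexing without truncated subtraction.\<close>

definition turns :: "gpoint list \<Rightarrow> nat set" where
  "turns ps = {i. Suc (Suc i) < length ps \<and>
     step_dir (ps ! i) (ps ! Suc i) \<noteq> step_dir (ps ! Suc i) (ps ! Suc (Suc i))}"

lemma finite_turns: "finite (turns ps)"
  by (rule finite_subset[of _ "{..<length ps}"]) (auto simp: turns_def)

lemma bends_eq_card_turns: "bends ps = card (turns ps)"
proof -
  have "{i. 0 < i \<and> Suc i < length ps \<and>
      step_dir (ps ! (i - 1)) (ps ! i) \<noteq> step_dir (ps ! i) (ps ! Suc i)} = Suc ` turns ps"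
    unfolding turns_def by (auto simp: image_iff gr0_conv_Suc)
  then show ?thesis unfolding bends_def by (simp add: card_image)
qed

lemma turns_between_rows:
  assumes bends: "bends ps \<le> 2"
    and ka: "snd (ps ! ka) = a" "snd (ps ! Suc ka) = a"
    and kb: "Suc kb < length ps" "snd (ps ! kb) = b" "snd (ps ! Suc kb) = b"
    and "ka < kb" "a \<noteq> b"
  obtains t1 k t2 where "ka \<le> t1" "t1 < k" "k \<le> t2" "t2 < kb"
    "snd (ps ! k) \<noteq> snd (ps ! Suc k)" "turns ps = {t1, t2}"
proof -
  define d where "d j = step_dir (ps ! j) (ps ! Suc j)" for j
  obtain k where k: "ka \<le> k" "k < kb" "snd (ps ! Suc k) \<noteq> snd (ps ! k)"
    using exists_step_change[of ka kb "\<lambda>j. snd (ps ! j)"] assms by auto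
  have "snd (d ka) = 0" "snd (d kb) = 0" "snd (d k) \<noteq> 0"
    using ka kb k unfolding d_def step_dir_def by auto
  then have "d ka \<noteq> d k" "d k \<noteq> d kb" by auto
  then obtain t1 t2 where t1: "ka \<le> t1" "t1 < k" "d (Suc t1) \<noteq> d t1"
    and t2: "k \<le> t2" "t2 < kb" "d (Suc t2) \<noteq> d t2"
    using exists_step_change[of ka k d] exists_step_change[of k kb d] k by (metis less_imp_le)
  have "{t1, t2} \<subseteq> turns ps"
    using t1 t2 kb unfolding turns_def d_def by auto
  moreover have "card (turns ps) \<le> card {t1, t2}"
    using bends t1 t2 by (simp add: bends_eq_card_turns)
  ultimately have "turns ps = {t1, t2}"
    using finite_turns by (metis card_seteq)
  then show thesis
    using that t1 t2 k by auto
qed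

definition segment_end :: "int \<Rightarrow> int \<Rightarrow> int \<Rightarrow> bool" where
  "segment_end x l r \<longleftrightarrow> l < r \<and> (x = l \<or> x = r)"

definition two_row_edges :: "int \<Rightarrow> int \<Rightarrow> int \<Rightarrow> int \<Rightarrow> int \<Rightarrow> int \<Rightarrow> int \<Rightarrow> gpoint set set" where
  "two_row_edges a b x la ra lb rb =
     row_edges a la ra \<union> column_edges x (min a b) (max a b) \<union> row_edges b lb rb"

lemma three_runs_edges:
  fixes f :: "nat \<Rightarrow> gpoint"
  assumes run1: "\<forall>j. j < i1 \<longrightarrow> f (Suc j) = (fst (f j) + sa, snd (f j))"
    and run2: "\<forall>j. i1 \<le> j \<and> j < i2 \<longrightarrow> f (Suc j) = (fst (f j), snd (f j) + sv)"
    and run3: "\<forall>j. i2 \<le> j \<and> j < N \<longrightarrow> f (Suc j) = (fst (f j) + sb, snd (f j))"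
    and "ka < i1" "i1 < i2" "i2 \<le> kb" "kb < N"
    and "sa = 1 \<or> sa = -1" "sv = 1 \<or> sv = -1" "sb = 1 \<or> sb = -1"
  shows "\<exists>x la ra lb rb. segment_end x la ra \<and> segment_end x lb rb \<and>
    (\<lambda>j. {f j, f (Suc j)}) ` {0..<N} = two_row_edges (snd (f ka)) (snd (f kb)) x la ra lb rb"
proof -
  have "\<forall>j. 0 \<le> j \<and> j < 0 + i1 \<longrightarrow> f (Suc j) = (fst (f j) + sa, snd (f j))"
    "\<forall>j. i1 \<le> j \<and> j < i1 + (i2 - i1) \<longrightarrow> f (Suc j) = (fst (f j), snd (f j) + sv)"
    "\<forall>j. i2 \<le> j \<and> j < i2 + (N - i2) \<longrightarrow> f (Suc j) = (fst (f j) + sb, snd (f j))"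
    using assms by auto
  note segs = row_run_edges[OF this(1)] column_run_edges[OF this(2)] row_run_edges[OF this(3)]
  have "\<forall>j. 0 \<le> j \<and> j < ka \<longrightarrow> snd (f (Suc j)) = snd (f j)"
    "\<forall>j. i2 \<le> j \<and> j < kb \<longrightarrow> snd (f (Suc j)) = snd (f j)"
    using assms by auto
  then have rows: "snd (f ka) = snd (f 0)" "snd (f kb) = snd (f i2)"
    using eq_if_steps_eq[of 0 ka "\<lambda>j. snd (f j)" ka] eq_if_steps_eq[of i2 kb "\<lambda>j. snd (f j)" kb]
      assms by auto
  define x where "x = fst (f i1)"
  have "{0..<N} = {0..<0 + i1} \<union> {i1..<i1 + (i2 - i1)} \<union> {i2..<i2 + (N - i2)}"
    using assms by auto
  then have "(\<lambda>j. {f j, f (Suc j)}) ` {0..<N} =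
      two_row_edges (snd (f ka)) (snd (f kb)) x (min (fst (f 0)) x) (max (fst (f 0)) x)
        (min x (fst (f N))) (max x (fst (f N)))"
    using segs assms rows by (simp add: x_def two_row_edges_def image_Un)
  moreover have "segment_end x (min (fst (f 0)) x) (max (fst (f 0)) x)"
    "segment_end x (min x (fst (f N))) (max x (fst (f N)))"
    using segs assms by (auto simp: x_def segment_end_def)
  ultimately show ?thesis by blast
qed

lemma path_edges_conv_nth: "path_edges ps = (\<lambda>j. {ps ! j, ps ! Suc j}) ` {0..<length ps - 1}"
  unfolding path_edges_def by auto

lemma two_row_path_edges_ordered:
  assumes adj: "\<forall>i. Suc i < length ps \<longrightarrow> grid_adj (ps ! i) (ps ! Suc i)"
    and bends: "bends ps \<le> 2"
    and ka: "snd (ps ! ka) = a" "snd (ps ! Suc ka) = a"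
    and kb: "Suc kb < length ps" "snd (ps ! kb) = b" "snd (ps ! Suc kb) = b"
    and "ka < kb" "a \<noteq> b"
  shows "\<exists>x la ra lb rb. segment_end x la ra \<and> segment_end x lb rb \<and>
    path_edges ps = two_row_edges a b x la ra lb rb"
proof -
  obtain t1 k t2 where t: "ka \<le> t1" "t1 < k" "k \<le> t2" "t2 < kb"
    and k: "snd (ps ! k) \<noteq> snd (ps ! Suc k)" and turns: "turns ps = {t1, t2}"
    using turns_between_rows[OF bends ka kb] assms by blast
  define f where "f j = ps ! j" for j
  define d where "d j = step_dir (f j) (f (Suc j))" for j
  define n where "n = length ps"
  have d_eq: "d j = d j'"
    if "t1 \<notin> {p..<q}" "t2 \<notin> {p..<q}" "Suc q < n" "j \<in> {p..q}" "j' \<in> {p..q}" for p q j j'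
  proof -
    have "d (Suc i) = d i" if "p \<le> i" "i < q" for i
    proof -
      have "i \<notin> turns ps" "Suc (Suc i) < length ps"
        using that \<open>t1 \<notin> {p..<q}\<close> \<open>t2 \<notin> {p..<q}\<close> \<open>Suc q < n\<close> turns unfolding n_def by auto
      then show ?thesis unfolding turns_def d_def f_def by simp
    qed
    then have "\<forall>i. p \<le> i \<and> i < q \<longrightarrow> d (Suc i) = d i" by blast
    from eq_if_steps_eq[OF this] that(4,5) show ?thesis by (metis atLeastAtMost_iff)
  qed
  have dirs: "snd (d ka) = 0 \<and> (fst (d ka) = 1 \<or> fst (d ka) = -1)"
    "fst (d k) = 0 \<and> (snd (d k) = 1 \<or> snd (d k) = -1)"
    "snd (d kb) = 0 \<and> (fst (d kb) = 1 \<or> fst (d kb) = -1)"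
    using step_dir_grid_adj_same_row step_dir_grid_adj_other_row adj ka kb k t
    unfolding d_def f_def by auto
  have step: "f (Suc j) = (fst (f j) + fst (d j), snd (f j) + snd (d j))" for j
    unfolding d_def by (rule step_dir_step)
  have "d j = d ka" if "j < Suc t1" for j
    using d_eq[of 0 t1 j ka] that t kb unfolding n_def by auto
  moreover have "d j = d k" if "Suc t1 \<le> j" "j < Suc t2" for j
    using d_eq[of "Suc t1" t2 j k] that t kb unfolding n_def by auto
  moreover have "d j = d kb" if "Suc t2 \<le> j" "j < n - 1" for j
    using d_eq[of "Suc t2" "n - 2" j kb] that t kb unfolding n_def by auto
  ultimately have runs:
    "\<forall>j. j < Suc t1 \<longrightarrow> f (Suc j) = (fst (f j) + fst (d ka), snd (f j))"
    "\<forall>j. Suc t1 \<le> j \<and> j < Suc t2 \<longrightarrow> f (Suc j) = (fst (f j), snd (f j) + snd (d k))"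
    "\<forall>j. Suc t2 \<le> j \<and> j < n - 1 \<longrightarrow> f (Suc j) = (fst (f j) + fst (d kb), snd (f j))"
    using dirs step by (auto simp: prod_eq_iff)
  have "path_edges ps = (\<lambda>j. {f j, f (Suc j)}) ` {0..<n - 1}"
    unfolding path_edges_conv_nth f_def n_def ..
  with three_runs_edges[OF runs, of ka kb] dirs t kb show ?thesis
    using ka kb unfolding f_def n_def by auto
qed

lemma intersects_rowE:
  assumes "intersects_row ps y"
  obtains k where "Suc k < length ps" "snd (ps ! k) = y" "snd (ps ! Suc k) = y"
proof -
  obtain x k where "Suc k < length ps" "{(x, y), (x + 1, y)} = {ps ! k, ps ! Suc k}"
    using assms unfolding intersects_row_def path_edges_def by blast
  then show thesis using that by (metis doubleton_eq_iff snd_conv)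
qed

lemma two_row_edges_commute: "two_row_edges b a x lb rb la ra = two_row_edges a b x la ra lb rb"
  unfolding two_row_edges_def by (auto simp: min.commute max.commute)

lemma two_row_path_edges:
  assumes "grid_path ps" "bends ps \<le> 2" "intersects_row ps a" "intersects_row ps b" "a \<noteq> b"
  shows "\<exists>x la ra lb rb. segment_end x la ra \<and> segment_end x lb rb \<and>
    path_edges ps = two_row_edges a b x la ra lb rb"
proof -
  have adj: "\<forall>i. Suc i < length ps \<longrightarrow> grid_adj (ps ! i) (ps ! Suc i)"
    using assms(1) unfolding grid_path_def by blast
  obtain ka kb where ka: "Suc ka < length ps" "snd (ps ! ka) = a" "snd (ps ! Suc ka) = a"
    and kb: "Suc kb < length ps" "snd (ps ! kb) = b" "snd (ps ! Suc kb) = b"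
    using intersects_rowE assms(3,4) by metis
  have "ka \<noteq> kb" using ka kb assms(5) by auto
  then consider "ka < kb" | "kb < ka" by linarith
  then show ?thesis
  proof cases
    case 1
    then show ?thesis using two_row_path_edges_ordered[OF adj assms(2) ka(2,3) kb] assms(5) by blast
  next
    case 2
    then show ?thesis using two_row_path_edges_ordered[OF adj assms(2) kb(2,3) ka] assms(5)
      by (metis two_row_edges_commute)
  qed
qed

lemma row_edges_Int_row_edges_iff:
  "row_edges y l r \<inter> row_edges y l' r' \<noteq> {} \<longleftrightarrow> {l..<r} \<inter> {l'..<r'} \<noteq> {}"
proof
  assume "{l..<r} \<inter> {l'..<r'} \<noteq> {}"
  then obtain x where "x \<in> {l..<r}" "x \<in> {l'..<r'}" by blast
  then have "{(x, y), (x + 1, y)} \<in> row_edges y l r \<inter> row_edges y l' r'"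
    by (simp add: row_edges_def)
  then show "row_edges y l r \<inter> row_edges y l' r' \<noteq> {}" by blast
qed (auto simp: row_edges_def doubleton_eq_iff)

lemma row_edges_Int_row_edges_other_row:
  "y \<noteq> y' \<Longrightarrow> row_edges y l r \<inter> row_edges y' l' r' = {}"
  unfolding row_edges_def by (auto simp: doubleton_eq_iff)

lemma row_edges_Int_column_edges: "row_edges y l r \<inter> column_edges x l' r' = {}"
  unfolding row_edges_def column_edges_def by (auto simp: doubleton_eq_iff)

lemma column_edges_Int_column_edges_iff:
  "l < r \<Longrightarrow> column_edges x l r \<inter> column_edges x' l r \<noteq> {} \<longleftrightarrow> x = x'"
  unfolding column_edges_def by (auto simp: doubleton_eq_iff)

lemma two_row_edges_Int_iff:
  assumes "a \<noteq> b"
  shows "two_row_edges a b x la ra lb rb \<inter> two_row_edges a b x' la' ra' lb' rb' \<noteq> {} \<longleftrightarrow>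
    {la..<ra} \<inter> {la'..<ra'} \<noteq> {} \<or> {lb..<rb} \<inter> {lb'..<rb'} \<noteq> {} \<or> x = x'"
proof -
  have "two_row_edges a b x la ra lb rb \<inter> two_row_edges a b x' la' ra' lb' rb' =
      (row_edges a la ra \<inter> row_edges a la' ra') \<union>
      (column_edges x (min a b) (max a b) \<inter> column_edges x' (min a b) (max a b)) \<union>
      (row_edges b lb rb \<inter> row_edges b lb' rb')"
    unfolding two_row_edges_def
    using row_edges_Int_row_edges_other_row[OF assms] row_edges_Int_row_edges_other_row[OF assms[symmetric]]
      row_edges_Int_column_edges by blast
  moreover have "min a b < max a b" using assms by auto
  ultimately show ?thesis
    by (simp add: row_edges_Int_row_edges_iff column_edges_Int_column_edges_iff) blast
qed

definition track_lo :: "int \<Rightarrow> int \<Rightarrow> real" where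
  "track_lo l x = (if x = l then of_int l else of_int l + 1/4)"

definition track_hi :: "int \<Rightarrow> int \<Rightarrow> real" where
  "track_hi r x = (if x = r then of_int r else of_int r - 1/4)"

lemma track_lo_le_track_hi: "l < r \<Longrightarrow> track_lo l x \<le> track_hi r x"
  unfolding track_lo_def track_hi_def by auto

lemma track_intervals_meet_iff:
  assumes "segment_end x l r" "segment_end x' l' r'"
  shows "{track_lo l x..track_hi r x} \<inter> {track_lo l' x'..track_hi r' x'} \<noteq> {} \<longleftrightarrow>
    {l..<r} \<inter> {l'..<r'} \<noteq> {} \<or> x = x'"
proof
  assume "{track_lo l x..track_hi r x} \<inter> {track_lo l' x'..track_hi r' x'} \<noteq> {}"
  then obtain t where "t \<in> {track_lo l x..track_hi r x} \<inter> {track_lo l' x'..track_hi r' x'}"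
    by blast
  then have t: "track_lo l x \<le> t" "t \<le> track_hi r x" "track_lo l' x' \<le> t" "t \<le> track_hi r' x'"
    by simp_all
  show "{l..<r} \<inter> {l'..<r'} \<noteq> {} \<or> x = x'"
  proof (cases "max l l' < min r r'")
    case True
    then have "max l l' \<in> {l..<r} \<inter> {l'..<r'}" by auto
    then show ?thesis by blast
  next
    case False
    with t assms have "x = x'"
      unfolding track_lo_def track_hi_def segment_end_def
      by (cases "l \<le> l'"; cases "r \<le> r'"; auto split: if_splits)
    then show ?thesis ..
  qed
next
  assume "{l..<r} \<inter> {l'..<r'} \<noteq> {} \<or> x = x'"
  then consider "x = x'" | y where "y \<in> {l..<r}" "y \<in> {l'..<r'}" by blast
  then show "{track_lo l x..track_hi r x} \<inter> {track_lo l' x'..track_hi r' x'} \<noteq> {}"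
  proof cases
    case 1
    with assms have "of_int x \<in> {track_lo l x..track_hi r x} \<inter> {track_lo l' x'..track_hi r' x'}"
      unfolding track_lo_def track_hi_def segment_end_def by auto
    then show ?thesis by blast
  next
    case 2
    then have "of_int y + 1/2 \<in> {track_lo l x..track_hi r x} \<inter> {track_lo l' x'..track_hi r' x'}"
      unfolding track_lo_def track_hi_def by auto
    then show ?thesis by blast
  qed
qed

lemma two_track_interval_graph_if_two_row_edges:
  fixes X LA RA LB RB :: "'v \<Rightarrow> int"
  assumes "a \<noteq> b"
    and ends: "\<forall>u\<in>S. segment_end (X u) (LA u) (RA u) \<and> segment_end (X u) (LB u) (RB u)"
    and adj: "\<forall>u\<in>S. \<forall>v\<in>S. u \<noteq> v \<longrightarrow> (E u v \<longleftrightarrow>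
      two_row_edges a b (X u) (LA u) (RA u) (LB u) (RB u) \<inter>
      two_row_edges a b (X v) (LA v) (RA v) (LB v) (RB v) \<noteq> {})"
  shows "two_track_interval_graph S E"
  unfolding two_track_interval_graph_def
proof (intro exI conjI ballI impI)
  fix u assume "u \<in> S"
  with ends show "track_lo (LA u) (X u) \<le> track_hi (RA u) (X u)"
    "track_lo (LB u) (X u) \<le> track_hi (RB u) (X u)"
    by (auto simp: segment_end_def track_lo_le_track_hi)
next
  fix u v assume "u \<in> S" "v \<in> S" "u \<noteq> v"
  with ends have "segment_end (X u) (LA u) (RA u)" "segment_end (X u) (LB u) (RB u)"
    "segment_end (X v) (LA v) (RA v)" "segment_end (X v) (LB v) (RB v)" by auto
  with adj \<open>u \<in> S\<close> \<open>v \<in> S\<close> \<open>u \<noteq> v\<close> show "E u v \<longleftrightarrow>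
    {track_lo (LA u) (X u)..track_hi (RA u) (X u)} \<inter> {track_lo (LA v) (X v)..track_hi (RA v) (X v)} \<noteq> {} \<or>
    {track_lo (LB u) (X u)..track_hi (RB u) (X u)} \<inter> {track_lo (LB v) (X v)..track_hi (RB v) (X v)} \<noteq> {}"
    by (simp only: two_row_edges_Int_iff[OF \<open>a \<noteq> b\<close>] track_intervals_meet_iff) blast
qed

theorem lemma3:
  fixes V :: "'v set" and E :: "'v \<Rightarrow> 'v \<Rightarrow> bool" and P :: "'v \<Rightarrow> gpoint list"
    and a b :: int
  assumes "finite V"
    and "\<forall>u v. E u v \<longleftrightarrow> E v u"
    and "\<forall>u. \<not> E u u"
    and "Bk_EPG_rep 2 V E P"
    and "a \<noteq> b"
  shows "two_track_interval_graph {u \<in> V. row_index P u = {a, b}} E"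
proof -
  define S where "S = {u \<in> V. row_index P u = {a, b}}"
  have "\<forall>u\<in>S. \<exists>x la ra lb rb. segment_end x la ra \<and> segment_end x lb rb \<and>
      path_edges (P u) = two_row_edges a b x la ra lb rb"
    using assms(4,5) two_row_path_edges unfolding S_def row_index_def Bk_EPG_rep_def
    by (simp add: set_eq_iff)
  then obtain X LA RA LB RB where shape: "\<forall>u\<in>S. segment_end (X u) (LA u) (RA u) \<and>
      segment_end (X u) (LB u) (RB u) \<and>
      path_edges (P u) = two_row_edges a b (X u) (LA u) (RA u) (LB u) (RB u)"
    by metis
  have "\<forall>u\<in>S. \<forall>v\<in>S. u \<noteq> v \<longrightarrow> (E u v \<longleftrightarrow>
      two_row_edges a b (X u) (LA u) (RA u) (LB u) (RB u) \<inter>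
      two_row_edges a b (X v) (LA v) (RA v) (LB v) (RB v) \<noteq> {})"
    using assms(4) shape unfolding Bk_EPG_rep_def S_def by auto
  with assms(5) shape show ?thesis
    unfolding S_def by (blast intro: two_track_interval_graph_if_two_row_edges)
qed

end
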